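(* For every fixed $n\ge1$, the function $\omega_n(s)=f_n(s)/g_n(s)$ is continuous and strictly increasing on $[0,1]$ (with the values at the endpoints understood by continuity), and consequently $$f_n(s)\ge\frac{n+1}{2}\,g_n(s)\qquad\text{for all } s\in(1/2,1).$$
   Context: $g_1(s)=s$, $g_n(s)=\frac{s g_{n-1}(s)}{1-s+ng_{n-1}(s)}$ for $n\ge2$; $f_1(s)=s$, $f_{k+1}(s)=\frac{s f_k(s)}{1-s+f_k(s)}$ for $k\ge1$; all defined for $s\in[0,1]$. *)

theory Defs
  imports Complex_Main
begin

text \<open>g_1(s) = s, g_n(s) = s g_{n-1}(s) / (1 - s + n g_{n-1}(s)) for n >= 2.
  The value at index 0 is an unused junk value.\<close>
fun gseq :: "nat \<Rightarrow> real \<Rightarrow> real" where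
  "gseq 0 s = s"
| "gseq (Suc 0) s = s"
| "gseq (Suc (Suc m)) s =
     s * gseq (Suc m) s / (1 - s + real (Suc (Suc m)) * gseq (Suc m) s)"

fun fseq :: "nat \<Rightarrow> real \<Rightarrow> real" where
  "fseq 0 s = s"
| "fseq (Suc 0) s = s"
| "fseq (Suc (Suc k)) s = s * fseq (Suc k) s / (1 - s + fseq (Suc k) s)"

end

theory Submission
  imports Defs
begin

text \<open>Both recursions are linear fractional in the previous term, so
  f_n(s) = s^n / P_n(s) and g_n(s) = s^n / Q_n(s), where
  P_n(s) = sum_{k<n} s^k (1-s)^(n-1-k) and Q_n(s) = sum_{k<n} (k+1) s^k (1-s)^(n-1-k)
  are polynomials with P_n > 0 on [0,1]; hence omega_n = Q_n / P_n.
  Monotonicity is the cross-multiplied inequality Q_n(x) P_n(y) <= Q_n(y) P_n(x)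
  for x <= y, proved by induction on n from the recurrences of P_n and Q_n
  (with the auxiliary polynomial (n+1) P_n - Q_n, which has nonnegative coefficients).
  Since omega_n(1/2) = (n+1)/2, monotonicity gives f_n >= (n+1)/2 g_n for s >= 1/2.\<close>

fun f_denom :: "nat \<Rightarrow> real \<Rightarrow> real" where
  "f_denom 0 s = 0"
| "f_denom (Suc n) s = (1 - s) * f_denom n s + s ^ n"

fun g_denom :: "nat \<Rightarrow> real \<Rightarrow> real" where
  "g_denom 0 s = 0"
| "g_denom (Suc n) s = (1 - s) * g_denom n s + real (Suc n) * s ^ n"

definition denom_excess :: "nat \<Rightarrow> real \<Rightarrow> real" where
  "denom_excess n s = real (Suc n) * f_denom n s - g_denom n s"

lemma denom_excess_0 [simp]: "denom_excess 0 s = 0"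
  by (simp add: denom_excess_def)

lemma denom_excess_Suc:
  "denom_excess (Suc n) s = (1 - s) * (denom_excess n s + f_denom n s) + s ^ n"
  unfolding denom_excess_def by (simp add: algebra_simps)

lemma f_denom_nonneg: "0 \<le> s \<Longrightarrow> s \<le> 1 \<Longrightarrow> 0 \<le> f_denom n s"
  by (induction n) auto

lemma g_denom_nonneg: "0 \<le> s \<Longrightarrow> s \<le> 1 \<Longrightarrow> 0 \<le> g_denom n s"
  by (induction n) auto

lemma denom_excess_nonneg: "0 \<le> s \<Longrightarrow> s \<le> 1 \<Longrightarrow> 0 \<le> denom_excess n s"
  by (induction n) (auto simp: denom_excess_Suc f_denom_nonneg)

lemma f_denom_pos:
  assumes "0 \<le> s" "s \<le> 1" "n \<ge> 1"
  shows "0 < f_denom n s"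
  using assms(3)
proof (induction n rule: dec_induct)
  case (step n)
  show ?case
  proof (cases "s = 1")
    case False
    then have "0 < (1 - s) * f_denom n s" using assms step.IH by simp
    then show ?thesis using assms by (simp add: add_pos_nonneg)
  qed simp
qed simp

lemma g_denom_pos:
  assumes "0 < s" "s \<le> 1" "n \<ge> 1"
  shows "0 < g_denom n s"
proof -
  obtain m where n: "n = Suc m" using assms(3) by (cases n) auto
  have "0 < real (Suc m) * s ^ m" "0 \<le> (1 - s) * g_denom m s"
    using assms g_denom_nonneg[of s m] by auto
  then show ?thesis unfolding n by simp
qed

lemma denom_excess_pos:
  assumes "0 \<le> s" "s < 1" "n \<ge> 1"
  shows "0 < denom_excess n s"
proof -
  obtain m where n: "n = Suc m" using assms(3) by (cases n) auto
  have "0 < (1 - s) * (denom_excess m s + f_denom m s)" if "m \<ge> 1"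
  proof -
    have "0 < denom_excess m s + f_denom m s"
      using assms f_denom_pos[OF _ _ that, of s] denom_excess_nonneg[of s m] by simp
    then show ?thesis using assms by simp
  qed
  then have "0 < (1 - s) * (denom_excess m s + f_denom m s) + s ^ m"
    using assms denom_excess_nonneg[of s m] f_denom_nonneg[of s m]
    by (cases "m = 0") (auto intro: add_pos_nonneg)
  then show ?thesis
    unfolding n denom_excess_Suc .
qed

lemma continuous_on_f_denom: "continuous_on A (f_denom n)"
  by (induction n) (auto intro!: continuous_intros)

lemma continuous_on_g_denom: "continuous_on A (g_denom n)"
  by (induction n) (auto intro!: continuous_intros)

lemma linear_fractional_step:
  fixes s a d c :: real
  assumes "d > 0" "(1 - s) * d + c * a \<noteq> 0"
  shows "s * (a / d) / (1 - s + c * (a / d)) = s * a / ((1 - s) * d + c * a)"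
proof -
  have "1 - s + c * (a / d) = ((1 - s) * d + c * a) / d"
    using assms by (simp add: field_simps)
  then show ?thesis using assms by simp
qed

lemma fseq_eq_f_denom:
  assumes "0 < s" "s \<le> 1" "n \<ge> 1"
  shows "fseq n s = s ^ n / f_denom n s"
  using assms(3)
proof (induction n rule: dec_induct)
  case (step n)
  then obtain m where n: "n = Suc m" by (cases n) auto
  have "f_denom n s > 0" "f_denom (Suc n) s > 0"
    using f_denom_pos[of s n] f_denom_pos[of s "Suc n"] assms step.hyps(1) by auto
  then have "s * (s ^ n / f_denom n s) / (1 - s + 1 * (s ^ n / f_denom n s))
      = s ^ Suc n / f_denom (Suc n) s"
    by (subst linear_fractional_step) auto
  then show ?case using step.IH by (simp add: n)
qed simp

lemma gseq_eq_g_denom: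
  assumes "0 < s" "s \<le> 1" "n \<ge> 1"
  shows "gseq n s = s ^ n / g_denom n s"
  using assms(3)
proof (induction n rule: dec_induct)
  case (step n)
  then obtain m where n: "n = Suc m" by (cases n) auto
  have "g_denom n s > 0" "g_denom (Suc n) s > 0"
    using g_denom_pos[of s n] g_denom_pos[of s "Suc n"] assms step.hyps(1) by auto
  then have "s * (s ^ n / g_denom n s) / (1 - s + real (Suc n) * (s ^ n / g_denom n s))
      = s ^ Suc n / g_denom (Suc n) s"
    by (subst linear_fractional_step) auto
  then show ?case using step.IH by (simp add: n)
qed simp

lemma fseq_div_gseq:
  assumes "0 < s" "s \<le> 1" "n \<ge> 1"
  shows "fseq n s / gseq n s = g_denom n s / f_denom n s"
  using assms f_denom_pos[of s n] g_denom_pos[of s n]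
  by (simp add: fseq_eq_f_denom gseq_eq_g_denom)

lemma pow_mult_f_denom_le:
  assumes "0 \<le> x" "x \<le> y" "y \<le> 1"
  shows "x ^ n * f_denom n y \<le> y ^ n * f_denom n x"
proof (induction n)
  case (Suc n)
  have xy: "x * (1 - y) \<le> y * (1 - x)" using assms by (simp add: algebra_simps)
  have "x * (1 - y) * (x ^ n * f_denom n y) \<le> y * (1 - x) * (y ^ n * f_denom n x)"
    by (rule mult_mono[OF xy Suc]) (use assms f_denom_nonneg[of y n] in auto)
  moreover have "x ^ n * y ^ n * x \<le> x ^ n * y ^ n * y"
    using assms by (simp add: mult_left_mono)
  ultimately show ?case by (simp add: algebra_simps)
qed simp

lemma pow_mult_denom_excess_le:
  assumes "0 \<le> x" "x \<le> y" "y \<le> 1"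
  shows "x ^ n * (1 - y) * denom_excess n y \<le> y ^ n * (1 - x) * denom_excess n x"
proof (induction n)
  case (Suc n)
  have xy: "x * (1 - y) \<le> y * (1 - x)" using assms by (simp add: algebra_simps)
  have a: "x * (1 - y) * (x ^ n * (1 - y) * denom_excess n y)
      \<le> y * (1 - x) * (y ^ n * (1 - x) * denom_excess n x)"
    by (rule mult_mono[OF xy Suc]) (use assms denom_excess_nonneg[of y n] in auto)
  have "x * (1 - y)^2 \<le> y * (1 - x)^2"
    using assms by (intro mult_mono power_mono) auto
  then have b: "x * (1 - y)^2 * (x ^ n * f_denom n y) \<le> y * (1 - x)^2 * (y ^ n * f_denom n x)"
    by (rule mult_mono[OF _ pow_mult_f_denom_le[OF assms]])
       (use assms f_denom_nonneg[of y n] in auto)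
  have c: "x ^ n * y ^ n * (x * (1 - y)) \<le> x ^ n * y ^ n * (y * (1 - x))"
    using assms xy by (simp add: mult_left_mono)
  have "x ^ Suc n * (1 - y) * denom_excess (Suc n) y =
      x * (1 - y) * (x ^ n * (1 - y) * denom_excess n y)
      + x * (1 - y)^2 * (x ^ n * f_denom n y) + x ^ n * y ^ n * (x * (1 - y))"
    by (simp add: denom_excess_Suc algebra_simps power2_eq_square)
  also have "\<dots> \<le> y * (1 - x) * (y ^ n * (1 - x) * denom_excess n x)
      + y * (1 - x)^2 * (y ^ n * f_denom n x) + x ^ n * y ^ n * (y * (1 - x))"
    using a b c by linarith
  also have "\<dots> = y ^ Suc n * (1 - x) * denom_excess (Suc n) x"
    by (simp add: denom_excess_Suc algebra_simps power2_eq_square)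
  finally show ?case .
qed simp

lemma denom_cross_diff_Suc:
  "g_denom (Suc n) y * f_denom (Suc n) x - g_denom (Suc n) x * f_denom (Suc n) y =
   (1 - x) * (1 - y) * (g_denom n y * f_denom n x - g_denom n x * f_denom n y)
   + (y ^ n * (1 - x) * denom_excess n x - x ^ n * (1 - y) * denom_excess n y)"
  by (simp add: denom_excess_def algebra_simps)

lemma denom_cross_le:
  assumes "0 \<le> x" "x \<le> y" "y \<le> 1"
  shows "g_denom n x * f_denom n y \<le> g_denom n y * f_denom n x"
proof (induction n)
  case (Suc n)
  then have "0 \<le> (1 - x) * (1 - y) * (g_denom n y * f_denom n x - g_denom n x * f_denom n y)"
    using assms by auto
  then show ?case
    using denom_cross_diff_Suc[of n y x] pow_mult_denom_excess_le[OF assms, of n] by linarith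
qed simp

lemma denom_cross_less:
  assumes "0 \<le> x" "x < y" "y \<le> 1" "n \<ge> 2"
  shows "g_denom n x * f_denom n y < g_denom n y * f_denom n x"
  using assms(4)
proof (induction n rule: dec_induct)
  case base
  then show ?case using assms by (simp add: numeral_2_eq_2 algebra_simps)
next
  case (step n)
  have excess: "0 \<le> y ^ n * (1 - x) * denom_excess n x - x ^ n * (1 - y) * denom_excess n y"
    using pow_mult_denom_excess_le[of x y n] assms by simp
  have cross: "0 \<le> (1 - x) * (1 - y) * (g_denom n y * f_denom n x - g_denom n x * f_denom n y)"
    using denom_cross_le[of x y n] assms by auto
  show ?case
  proof (cases "y = 1")
    case True  \<comment> \<open>the factor 1 - y kills the inductive summand; strictness comes from the excess\<close>
    then have "0 < y ^ n * (1 - x) * denom_excess n x - x ^ n * (1 - y) * denom_excess n y"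
      using assms denom_excess_pos[of x n] step.hyps by simp
    then show ?thesis using cross denom_cross_diff_Suc[of n y x] by linarith
  next
    case False
    then have "0 < (1 - x) * (1 - y) * (g_denom n y * f_denom n x - g_denom n x * f_denom n y)"
      using assms step.IH by auto
    then show ?thesis using excess denom_cross_diff_Suc[of n y x] by linarith
  qed
qed

lemma continuous_on_denom_ratio:
  assumes "n \<ge> 1"
  shows "continuous_on {0..1} (\<lambda>s. g_denom n s / f_denom n s)"
  using f_denom_pos[of _ n] assms
  by (intro continuous_intros continuous_on_f_denom continuous_on_g_denom) force

lemma strict_mono_on_denom_ratio:
  assumes "n \<ge> 2"
  shows "strict_mono_on {0..1} (\<lambda>s. g_denom n s / f_denom n s)"
proof (rule strict_mono_onI)
  fix x y :: real
  assume "x \<in> {0..1}" "y \<in> {0..1}" "x < y"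
  then have "g_denom n x * f_denom n y < g_denom n y * f_denom n x"
      "f_denom n x > 0" "f_denom n y > 0"
    using denom_cross_less[of x y n] f_denom_pos assms by auto
  then show "g_denom n x / f_denom n x < g_denom n y / f_denom n y"
    by (simp add: field_simps)
qed

lemma denoms_at_half: "f_denom n (1/2) * 2 ^ n = 2 * n \<and> g_denom n (1/2) * 2 ^ n = n * (n + 1)"
proof (induction n)
  case (Suc n)
  have half_pow: "(1/2::real) ^ n * 2 ^ n = 1"
    by (simp add: power_one_over)
  have "f_denom (Suc n) (1/2) * 2 ^ Suc n = f_denom n (1/2) * 2 ^ n + 2 * ((1/2) ^ n * 2 ^ n)"
      "g_denom (Suc n) (1/2) * 2 ^ Suc n = g_denom n (1/2) * 2 ^ n + 2 * (n + 1) * ((1/2) ^ n * 2 ^ n)"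
    by (simp_all add: algebra_simps)
  then show ?case using Suc by (simp only: half_pow) (simp add: algebra_simps)
qed simp

lemma g_denom_half: "g_denom n (1/2) = (real n + 1) / 2 * f_denom n (1/2)"
proof -
  have "g_denom n (1/2) * 2 ^ n = (real n + 1) / 2 * f_denom n (1/2) * 2 ^ n"
    using denoms_at_half[of n] by (simp add: algebra_simps)
  then show ?thesis by simp
qed

lemma fseq_ge_gseq:
  assumes "1/2 \<le> s" "s \<le> 1" "n \<ge> 1"
  shows "(real n + 1) / 2 * gseq n s \<le> fseq n s"
proof -
  have P: "f_denom n (1/2) > 0" "f_denom n s > 0" and Q: "g_denom n s > 0"
    using f_denom_pos g_denom_pos assms by auto
  have "g_denom n (1/2) * f_denom n s \<le> g_denom n s * f_denom n (1/2)"
    using denom_cross_le[of "1/2" s n] assms by auto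
  then have "(real n + 1) / 2 * f_denom n s * f_denom n (1/2) \<le> g_denom n s * f_denom n (1/2)"
    unfolding g_denom_half by (simp add: ac_simps)
  then have "(real n + 1) / 2 * f_denom n s \<le> g_denom n s"
    using P(1) by (rule mult_right_le_imp_le)
  then have "s ^ n * ((real n + 1) / 2 * f_denom n s) / (f_denom n s * g_denom n s)
      \<le> s ^ n * g_denom n s / (f_denom n s * g_denom n s)"
    using P Q assms by (intro divide_right_mono mult_left_mono) auto
  then show ?thesis
    using assms P Q by (simp add: fseq_eq_f_denom gseq_eq_g_denom mult.commute)
qed

theorem mainTheorem11:
  fixes n :: nat
  assumes "n \<ge> 1"
  shows "(\<exists>\<omega> :: real \<Rightarrow> real.
            continuous_on {0..1} \<omega>
          \<and> (\<forall>s\<in>{0<..1}. \<omega> s = fseq n s / gseq n s)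
          \<and> (n \<ge> 2 \<longrightarrow> strict_mono_on {0..1} \<omega>))
       \<and> (\<forall>s\<in>{1/2<..<1}. fseq n s \<ge> (real n + 1) / 2 * gseq n s)"
proof (intro conjI ballI exI[of _ "\<lambda>s. g_denom n s / f_denom n s"] impI)
  show "continuous_on {0..1} (\<lambda>s. g_denom n s / f_denom n s)"
    using continuous_on_denom_ratio[OF assms] .
next
  fix s :: real
  assume "s \<in> {0<..1}"
  then show "g_denom n s / f_denom n s = fseq n s / gseq n s"
    using fseq_div_gseq assms by simp
next
  show "n \<ge> 2 \<Longrightarrow> strict_mono_on {0..1} (\<lambda>s. g_denom n s / f_denom n s)"
    by (rule strict_mono_on_denom_ratio)
next
  fix s :: real
  assume "s \<in> {1/2<..<1}"
  then show "(real n + 1) / 2 * gseq n s \<le> fseq n s"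
    using fseq_ge_gseq assms by simp
qed

end
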